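(* Under Assumptions 1–4 below, the iterates of Algorithm 2Direction satisfy, for every $t\ge0$, $$\begin{aligned}\mathbb E_t[f(z^{t+1})-f(x^* )]&\le(1-p\theta_{t+1})(f(z^t)-f(x^* ))+\frac{2p\omega}{n\bar L}\Big(\frac1n\sum_{i=1}^n\|h_i^t-\nabla f_i(z^t)\|^2\Big)\\&\quad+p\theta_{t+1}\Big(\frac{\bar L+\Gamma_t\mu}{2\gamma_{t+1}}\|u^t-x^*\|^2-\frac{\bar L+\Gamma_{t+1}\mu}{2\gamma_{t+1}}\mathbb E_t\|u^{t+1}-x^*\|^2\Big)\\&\quad+p\Big(\frac{4\omega L_{\max}}{n\bar L}+\theta_{t+1}-1\Big)D_f(z^t,y^{t+1})+\frac{pL}{2}\mathbb E_t\|x^{t+1}-y^{t+1}\|^2-\frac{p\theta_{t+1}^2\bar L}{2}\mathbb E_t\|u^{t+1}-u^t\|^2,\end{aligned}$$ where $D_f(x,y)=f(x)-f(y)-\langle\nabla f(y),x-y\rangle$.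
   Context: Setting: $f=\frac1n\sum_{i=1}^nf_i$, $f_i:\mathbb R^d\to\mathbb R$. Assumption 1: each $f_i$ is $L_i$-smooth, $L_{\max}=\max_iL_i$, and $\widehat L>0$ satisfies $\frac1n\sum_i\|\nabla f_i(x)-\nabla f_i(y)\|^2\le\widehat L^2\|x-y\|^2$ for all $x,y$. Assumption 2: $f$ is $L$-smooth. Assumption 3: each $f_i$ is convex and $f$ is $\mu$-strongly convex ($\mu\ge0$) with minimizer $x^*$. Assumption 4: the randomness of all compressors is drawn independently (of each other, of the coins $c^t$, and of the past). Compressor classes: $\mathbb U(\omega)$ ($\omega\ge0$) = stochastic maps $\mathcal C$ with $\mathbb E\mathcal C(x)=x$, $\mathbb E\|\mathcal C(x)-x\|^2\le\omega\|x\|^2$; $\mathbb B(\alpha)$ ($\alpha\in(0,1]$) = possibly stochastic maps with $\mathbb E\|\mathcal C(x)-x\|^2\le(1-\alpha)\|x\|^2$. Algorithm 2Direction: compressors $\mathcal C_i^{D,y},\mathcal C_i^{D,z}\in\mathbb U(\omega)$ (workers), $\mathcal C^P\in\mathbb B(\alpha)$ (server); parameters $\bar L>0$, $\mu\ge0$ (the strong convexity constant), $p\in(0,1]$, $\Gamma_0\ge1$, $\tau\in(0,1]$, $x^0,h_1^0,\dots,h_n^0,k^0,v^0\in\mathbb R^d$. Set $\beta=1/(\omega+1)$, $w^0=z^0=u^0=x^0$, $h^0=\frac1n\sum_ih_i^0$, $\theta_{\min}=\frac14\min\{1,\alpha/p,\tau/p,\beta/p\}$. For $t=0,1,\dots$: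 let $\bar\theta_{t+1}$ be the largest root of $p\bar L\Gamma_t\theta^2+p(\bar L+\Gamma_t\mu)\theta-(\bar L+\Gamma_t\mu)=0$, $\theta_{t+1}=\min\{\bar\theta_{t+1},\theta_{\min}\}$, $\gamma_{t+1}=p\theta_{t+1}\Gamma_t/(1-p\theta_{t+1})$, $\Gamma_{t+1}=\Gamma_t+\gamma_{t+1}$; $y^{t+1}=\theta_{t+1}w^t+(1-\theta_{t+1})z^t$; $m_i^{t,y}=\mathcal C_i^{D,y}(\nabla f_i(y^{t+1})-h_i^t)$; $g^{t+1}=h^t+\frac1n\sum_im_i^{t,y}$; $u^{t+1}=\arg\min_x\{\langle g^{t+1},x\rangle+\frac{\bar L+\Gamma_t\mu}{2\gamma_{t+1}}\|x-u^t\|^2+\frac\mu2\|x-y^{t+1}\|^2\}$; $q^{t+1}=\arg\min_x\{\langle k^t,x\rangle+\frac{\bar L+\Gamma_t\mu}{2\gamma_{t+1}}\|x-w^t\|^2+\frac\mu2\|x-y^{t+1}\|^2\}$; $w^{t+1}=q^{t+1}+\mathcal C^P(u^{t+1}-q^{t+1})$; $x^{t+1}=\theta_{t+1}u^{t+1}+(1-\theta_{t+1})z^t$; draw $c^t\sim\mathrm{Bernoulli}(p)$, and set $(k^{t+1},z^{t+1})=(v^t,x^{t+1})$ if $c^t=1$, $(k^{t+1},z^{t+1})=(k^t,z^t)$ if $c^t=0$; $m_i^{t,z}=\mathcal C_i^{D,z}(\nabla f_i(z^{t+1})-h_i^t)$; $h_i^{t+1}=h_i^t+\beta m_i^{t,z}$;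 $v^{t+1}=(1-\tau)v^t+\tau(h^t+\frac1n\sum_im_i^{t,z})$; $h^{t+1}=h^t+\frac\beta n\sum_im_i^{t,z}$. $\mathbb E_t$ denotes conditional expectation given the randomness of the first $t$ iterations. *)

theory Defs
  imports "HOL-Analysis.Analysis" "HOL-Probability.Probability"
begin

definition smooth_with :: "real \<Rightarrow> ('a::euclidean_space \<Rightarrow> real) \<Rightarrow> ('a \<Rightarrow> 'a) \<Rightarrow> bool" where
  "smooth_with L f Df \<longleftrightarrow>
     (\<forall>x. GDERIV f x :> Df x) \<and> (\<forall>x y. norm (Df x - Df y) \<le> L * norm (x - y))"

definition strongly_convex :: "real \<Rightarrow> ('a::euclidean_space \<Rightarrow> real) \<Rightarrow> bool" where
  "strongly_convex mu f \<longleftrightarrow> convex_on UNIV (\<lambda>x. f x - mu / 2 * norm x ^ 2)"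

text \<open>Class U(omega) of unbiased compressors: a stochastic map, realised as
  C :: sample \<Rightarrow> vector \<Rightarrow> vector on the probability space M.\<close>
definition unbiased_compressor :: "'w measure \<Rightarrow> real \<Rightarrow> ('w \<Rightarrow> 'a::euclidean_space \<Rightarrow> 'a) \<Rightarrow> bool" where
  "unbiased_compressor M omega C \<longleftrightarrow> omega \<ge> 0 \<and>
     (\<forall>x. (\<lambda>s. C s x) \<in> borel_measurable M \<and> integrable M (\<lambda>s. C s x) \<and>
          (\<integral>s. C s x \<partial>M) = x \<and>
          integrable M (\<lambda>s. (norm (C s x - x))\<^sup>2) \<and>
          (\<integral>s. (norm (C s x - x))\<^sup>2 \<partial>M) \<le> omega * (norm x)\<^sup>2)"

definition bregman :: "('a::euclidean_space \<Rightarrow> real) \<Rightarrow> ('a \<Rightarrow> 'a) \<Rightarrow> 'a \<Rightarrow> 'a \<Rightarrow> real" where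
  "bregman f Df x y = f x - f y - inner (Df y) (x - y)"

definition largest_root :: "real \<Rightarrow> real \<Rightarrow> real \<Rightarrow> real" where
  "largest_root a b c = (- b + sqrt (b\<^sup>2 + 4 * a * c)) / (2 * a)"

end

theory Submission
  imports Defs
begin

(* Write the aggregated compressed gradient as g = Df y + E.  Unbiasedness and independence of
   the worker compressors make E a mean-zero error whose second moment is the sum of the
   individual ones, and co-coercivity of each f_i bounds it by
   (omega / n) (4 Lmax D_f(z, y) + 2 (1/n) sum_i |h_i - Df_i z|^2).
   The update u' is affine in g, so u' = m - E / (2 K + mu), where m is the update computed with the
   exact gradient: the noise enters the distances only through its second moment.  Smoothness
   bounds E f(x') by the quadratic model at y, the three-point inequality of the proximal step
   together with strong convexity at xs controls the linear part, and the step-size rule gives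
   theta Lbar <= 2 K, so that the gain K |m - u|^2 of the proximal step pays for the noise.
   Finally the coin is independent of the compressors, whence E f(z') = p E f(x') + (1 - p) f(z). *)

section \<open>Smooth and convex functions\<close>

lemma convex_on_imp_above_tangent_plane:
  fixes F :: "'a::real_inner \<Rightarrow> real"
  assumes cv: "convex_on UNIV F" and d: "(F has_derivative (\<lambda>h. inner h D)) (at x)"
  shows "F x + inner D (y - x) \<le> F y"
proof -
  define phi where "phi = (\<lambda>t::real. F (x + t *\<^sub>R (y - x)))"
  have "convex_on UNIV phi"
    unfolding phi_def
  proof (rule convex_onI)
    fix a t s :: real assume a: "0 < a" "a < 1"
    have "x + ((1 - a) * t + a * s) *\<^sub>R (y - x) = (1 - a) *\<^sub>R (x + t *\<^sub>R (y - x)) + a *\<^sub>R (x + s *\<^sub>R (y - x))"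
      by (simp add: algebra_simps)
    then show "F (x + ((1 - a) *\<^sub>R t + a *\<^sub>R s) *\<^sub>R (y - x)) \<le> (1 - a) * F (x + t *\<^sub>R (y - x)) + a * F (x + s *\<^sub>R (y - x))"
      using convex_onD[OF cv, of a] a by simp
  qed simp
  moreover have "(phi has_real_derivative inner (y - x) D) (at 0)"
  proof -
    have "((\<lambda>t. x + t *\<^sub>R (y - x)) has_derivative (\<lambda>t. t *\<^sub>R (y - x))) (at 0)"
      by (auto intro!: derivative_eq_intros)
    moreover have "(F has_derivative (\<lambda>h. inner h D)) (at (x + 0 *\<^sub>R (y - x)))" using d by simp
    ultimately show ?thesis
      unfolding phi_def has_field_derivative_def
      by (rule has_derivative_compose[THEN has_derivative_eq_rhs]) (auto simp: fun_eq_iff)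
  qed
  ultimately have "inner (y - x) D * (1 - 0) \<le> phi 1 - phi 0"
    by (intro convex_on_imp_above_tangent) auto
  then show ?thesis unfolding phi_def by (simp add: inner_commute)
qed

lemma smooth_with_uminus:
  assumes "smooth_with L f Df"
  shows "smooth_with L (\<lambda>x. - f x) (\<lambda>x. - Df x)"
proof -
  have "GDERIV (\<lambda>x. - f x) x :> - Df x" for x
    using assms unfolding smooth_with_def gderiv_def by (simp add: has_derivative_minus)
  moreover have "norm (- Df x - - Df y) = norm (Df x - Df y)" for x y
    by (simp add: norm_minus_commute)
  ultimately show ?thesis using assms unfolding smooth_with_def by simp
qed

lemma smooth_with_le_quadratic:
  assumes sm: "smooth_with L f Df"
  shows "f y \<le> f x + inner (Df x) (y - x) + L / 2 * (norm (y - x))\<^sup>2"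
proof -
  define v where "v = y - x"
  define h where "h = (\<lambda>t::real. f (x + t *\<^sub>R v) - t * inner (Df x) v - L / 2 * t\<^sup>2 * (norm v)\<^sup>2)"
  have "h 1 \<le> h 0"
  proof (rule DERIV_nonpos_imp_nonincreasing[of 0 1])
    fix t :: real assume t: "0 \<le> t" "t \<le> 1"
    have "((\<lambda>t. x + t *\<^sub>R v) has_derivative (\<lambda>s. s *\<^sub>R v)) (at t)"
      by (auto intro!: derivative_eq_intros)
    moreover have "(f has_derivative (\<lambda>h. inner h (Df (x + t *\<^sub>R v)))) (at (x + t *\<^sub>R v))"
      using sm unfolding smooth_with_def gderiv_def by blast
    ultimately have "((\<lambda>t. f (x + t *\<^sub>R v)) has_real_derivative inner v (Df (x + t *\<^sub>R v))) (at t)"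
      unfolding has_field_derivative_def
      by (rule has_derivative_compose[THEN has_derivative_eq_rhs]) (auto simp: fun_eq_iff)
    then have "(h has_real_derivative inner v (Df (x + t *\<^sub>R v) - Df x) - L * t * (norm v)\<^sup>2) (at t)"
      unfolding h_def by (auto intro!: derivative_eq_intros simp: inner_diff_right inner_commute)
    moreover have "inner v (Df (x + t *\<^sub>R v) - Df x) \<le> L * t * (norm v)\<^sup>2"
    proof -
      have "inner v (Df (x + t *\<^sub>R v) - Df x) \<le> norm v * norm (Df (x + t *\<^sub>R v) - Df x)"
        by (rule norm_cauchy_schwarz)
      also have "\<dots> \<le> norm v * (L * norm ((x + t *\<^sub>R v) - x))"
        using sm unfolding smooth_with_def by (simp only: mult_left_mono norm_ge_zero)
      finally show ?thesis using t by (simp add: power2_eq_square mult_ac)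
    qed
    ultimately show "\<exists>d. (h has_real_derivative d) (at t) \<and> d \<le> 0" by auto
  qed simp
  then show ?thesis unfolding h_def v_def by simp
qed

lemma smooth_with_ge_quadratic:
  assumes "smooth_with L f Df"
  shows "f x + inner (Df x) (y - x) - L / 2 * (norm (y - x))\<^sup>2 \<le> f y"
  using smooth_with_le_quadratic[OF smooth_with_uminus[OF assms], of y x] by simp

lemma smooth_with_continuous: "smooth_with L f Df \<Longrightarrow> continuous_on UNIV f"
  unfolding smooth_with_def gderiv_def
  by (blast intro: continuous_at_imp_continuous_on has_derivative_continuous)

lemma strongly_convex_above_tangent:
  fixes f :: "'a::euclidean_space \<Rightarrow> real"
  assumes sc: "strongly_convex mu f" and sm: "smooth_with L f Df"
  shows "f y + inner (Df y) (x - y) + mu / 2 * (norm (x - y))\<^sup>2 \<le> f x"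
proof -
  have "((\<lambda>x. f x - mu / 2 * (norm x)\<^sup>2) has_derivative (\<lambda>h. inner h (Df y - mu *\<^sub>R y))) (at y)"
    using sm unfolding smooth_with_def gderiv_def power2_norm_eq_inner
    by (auto intro!: derivative_eq_intros simp: fun_eq_iff inner_diff_right inner_commute algebra_simps)
  from convex_on_imp_above_tangent_plane[OF sc[unfolded strongly_convex_def] this, of x]
  show ?thesis
    by (simp add: power2_norm_eq_inner inner_diff_left inner_diff_right inner_commute algebra_simps)
qed

lemma bregman_nonneg:
  assumes "convex_on UNIV f" and "smooth_with L f Df"
  shows "0 \<le> bregman f Df x y"
  using convex_on_imp_above_tangent_plane[OF assms(1), of "Df y" y x] assms(2)
  unfolding smooth_with_def gderiv_def bregman_def by auto

lemma smooth_with_nonneg: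
  fixes f :: "'a::euclidean_space \<Rightarrow> real"
  assumes "smooth_with L f Df"
  shows "0 \<le> L"
proof -
  obtain b :: 'a where "b \<in> Basis" using nonempty_Basis by blast
  then have "0 \<le> L * norm (b - 0)"
    using assms unfolding smooth_with_def by (metis norm_ge_zero order_trans)
  with \<open>b \<in> Basis\<close> show ?thesis by simp
qed

text \<open>Co-coercivity: apply the descent lemma at the point z - (1/L) (Df z - Df y),
  and bound f there from below by the tangent plane at y.\<close>
lemma bregman_ge_norm_gradient_diff:
  fixes f :: "'a::euclidean_space \<Rightarrow> real"
  assumes cv: "convex_on UNIV f" and sm: "smooth_with L f Df"
  shows "(norm (Df z - Df y))\<^sup>2 \<le> 2 * L * bregman f Df z y"
proof (cases "L = 0")
  case True
  then show ?thesis using sm unfolding smooth_with_def by simp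
next
  case False
  then have L: "L > 0" using smooth_with_nonneg[OF sm] by simp
  define G where "G = Df z - Df y"
  define w where "w = z - (1 / L) *\<^sub>R G"
  have "f y + inner (Df y) (w - y) \<le> f w"
    using bregman_nonneg[OF cv sm, of w y] unfolding bregman_def by simp
  moreover have "f w \<le> f z + inner (Df z) (w - z) + L / 2 * (norm (w - z))\<^sup>2"
    by (rule smooth_with_le_quadratic[OF sm])
  moreover have "inner (Df z) (w - z) - inner (Df y) (w - y) = - inner (Df y) (z - y) - (norm G)\<^sup>2 / L"
    unfolding w_def G_def
    by (simp add: inner_diff_right inner_diff_left power2_norm_eq_inner inner_commute diff_divide_distrib add_divide_distrib)
  moreover have "L / 2 * (norm (w - z))\<^sup>2 = (norm G)\<^sup>2 / (2 * L)"
    using L unfolding w_def by (simp add: power2_eq_square)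
  ultimately have "(norm G)\<^sup>2 / (2 * L) \<le> bregman f Df z y"
    unfolding bregman_def by (simp add: field_simps)
  then show ?thesis using L unfolding G_def by (simp add: field_simps)
qed

lemma bregman_scaled_sum:
  "bregman (\<lambda>x. c * (\<Sum>i\<in>I. f i x)) (\<lambda>x. c *\<^sub>R (\<Sum>i\<in>I. Df i x)) z y
     = c * (\<Sum>i\<in>I. bregman (f i) (Df i) z y)"
  unfolding bregman_def
  by (simp add: inner_sum_left sum_subtractf right_diff_distrib)

lemma norm_add_power2: "(norm (a + b))\<^sup>2 = (norm a)\<^sup>2 + 2 * inner a b + (norm b)\<^sup>2"
  for a b :: "'a::real_inner"
  using dot_norm[of a b] by simp

lemma norm_add_power2_le: "(norm (a + b))\<^sup>2 \<le> 2 * (norm a)\<^sup>2 + 2 * (norm b)\<^sup>2"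
  for a b :: "'a::real_normed_vector"
proof -
  have "(norm (a + b))\<^sup>2 \<le> (norm a + norm b)\<^sup>2"
    by (intro power_mono norm_triangle_ineq) simp
  moreover have "0 \<le> (norm a - norm b)\<^sup>2" by simp
  ultimately show ?thesis unfolding power2_sum power2_diff by linarith
qed

lemma shifted_gradient_le_bregman:
  fixes f :: "'a::euclidean_space \<Rightarrow> real"
  assumes "convex_on UNIV f" and "smooth_with L f Df" and "L \<le> Lmax"
  shows "(norm (Df y - h))\<^sup>2 \<le> 4 * Lmax * bregman f Df z y + 2 * (norm (h - Df z))\<^sup>2"
proof -
  have "(norm (Df y - h))\<^sup>2 \<le> 2 * (norm (Df z - Df y))\<^sup>2 + 2 * (norm (h - Df z))\<^sup>2"
    using norm_add_power2_le[of "Df y - Df z" "Df z - h"]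
    by (simp add: norm_minus_commute)
  also have "(norm (Df z - Df y))\<^sup>2 \<le> 2 * L * bregman f Df z y"
    by (rule bregman_ge_norm_gradient_diff[OF assms(1,2)])
  also have "\<dots> \<le> 2 * Lmax * bregman f Df z y"
    using bregman_nonneg[OF assms(1,2)] assms(3) by (intro mult_right_mono) auto
  finally show ?thesis by simp
qed

lemma sum_shifted_gradients_le_bregman:
  fixes fi :: "nat \<Rightarrow> 'a::euclidean_space \<Rightarrow> real"
  assumes n: "0 < n" and f: "f = (\<lambda>x. (1 / real n) * (\<Sum>i<n. fi i x))"
    and Df: "Df = (\<lambda>x. (1 / real n) *\<^sub>R (\<Sum>i<n. Dfi i x))"
    and smooth: "\<forall>i<n. smooth_with (Li i) (fi i) (Dfi i)" and convex: "\<forall>i<n. convex_on UNIV (fi i)"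
    and Lmax: "\<forall>i<n. Li i \<le> Lmax"
  shows "(\<Sum>i<n. (norm (Dfi i y - h i))\<^sup>2) \<le> real n * (4 * Lmax * bregman f Df z y
      + 2 * ((1 / real n) * (\<Sum>i<n. (norm (h i - Dfi i z))\<^sup>2)))"
proof -
  have "(\<Sum>i<n. (norm (Dfi i y - h i))\<^sup>2)
      \<le> (\<Sum>i<n. 4 * Lmax * bregman (fi i) (Dfi i) z y + 2 * (norm (h i - Dfi i z))\<^sup>2)"
    using smooth convex Lmax by (intro sum_mono shifted_gradient_le_bregman) auto
  also have "\<dots> = real n * (4 * Lmax * bregman f Df z y + 2 * ((1 / real n) * (\<Sum>i<n. (norm (h i - Dfi i z))\<^sup>2)))"
    unfolding f Df bregman_scaled_sum using n by (simp add: sum.distrib sum_distrib_left algebra_simps)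
  finally show ?thesis .
qed

section \<open>The proximal step\<close>

(* The update u^{t+1} of the algorithm in closed form, with K = (Lbar + Gam_t mu) / (2 gamma_{t+1}). *)
definition prox_point :: "real \<Rightarrow> real \<Rightarrow> 'a::real_vector \<Rightarrow> 'a \<Rightarrow> 'a \<Rightarrow> 'a" where
  "prox_point K mu g u y = (1 / (2 * K + mu)) *\<^sub>R ((2 * K) *\<^sub>R u + mu *\<^sub>R y - g)"

lemma norm_diff_power2_split:
  "(norm (x - u))\<^sup>2 = (norm (x - m))\<^sup>2 + 2 * inner (x - m) (m - u) + (norm (m - u))\<^sup>2"
  for x u m :: "'a::real_inner"
proof -
  have "x - u = (x - m) + (m - u)" by simp
  then show ?thesis by (simp only: norm_add_power2)
qed

lemma prox_objective_eq:
  fixes g u y x :: "'a::real_inner"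
  assumes "K > 0" and "mu \<ge> 0"
  defines "m \<equiv> prox_point K mu g u y"
  shows "inner g x + K * (norm (x - u))\<^sup>2 + mu / 2 * (norm (x - y))\<^sup>2
       = inner g m + K * (norm (m - u))\<^sup>2 + mu / 2 * (norm (m - y))\<^sup>2 + (K + mu / 2) * (norm (x - m))\<^sup>2"
proof -
  have "(2 * K + mu) *\<^sub>R m = (2 * K) *\<^sub>R u + mu *\<^sub>R y - g"
    using assms unfolding m_def prox_point_def by simp
  then have "g + (2 * K) *\<^sub>R (m - u) + mu *\<^sub>R (m - y) = 0"
    by (simp add: algebra_simps)
  then have "inner (x - m) (g + (2 * K) *\<^sub>R (m - u) + mu *\<^sub>R (m - y)) = 0" by simp
  then have "inner g (x - m) + 2 * K * inner (x - m) (m - u) + mu * inner (x - m) (m - y) = 0"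
    by (simp add: inner_add_right inner_commute)
  moreover have "K * (norm (x - u))\<^sup>2 = K * (norm (x - m))\<^sup>2 + 2 * K * inner (x - m) (m - u) + K * (norm (m - u))\<^sup>2"
    unfolding norm_diff_power2_split[of x u m] by (simp add: distrib_left)
  moreover have "mu / 2 * (norm (x - y))\<^sup>2
      = mu / 2 * (norm (x - m))\<^sup>2 + mu * inner (x - m) (m - y) + mu / 2 * (norm (m - y))\<^sup>2"
    unfolding norm_diff_power2_split[of x y m] by (simp add: distrib_left)
  moreover have "inner g x = inner g m + inner g (x - m)" by (simp add: inner_diff_right)
  moreover have "(K + mu / 2) * (norm (x - m))\<^sup>2 = K * (norm (x - m))\<^sup>2 + mu / 2 * (norm (x - m))\<^sup>2"
    by (simp add: distrib_right)
  ultimately show ?thesis by linarith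
qed

lemma arg_min_prox_objective:
  fixes g u y :: "'a::real_inner"
  assumes K: "K > 0" and mu: "mu \<ge> 0"
  shows "arg_min (\<lambda>x. inner g x + K * (norm (x - u))\<^sup>2 + mu / 2 * (norm (x - y))\<^sup>2) (\<lambda>_. True)
       = prox_point K mu g u y"
    (is "arg_min ?phi _ = ?m")
proof -
  have id: "?phi x = ?phi ?m + (K + mu / 2) * (norm (x - ?m))\<^sup>2" for x
    by (rule prox_objective_eq[OF K mu])
  have pos: "K + mu / 2 > 0" using K mu by simp
  have "?phi ?m \<le> ?phi x" for x
    using id[of x] pos by (simp add: add_increasing2)
  then have "is_arg_min ?phi (\<lambda>_. True) ?m"
    unfolding is_arg_min_def by (simp add: not_less)
  moreover have "x = ?m" if "is_arg_min ?phi (\<lambda>_. True) x" for x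
  proof (rule ccontr)
    assume "x \<noteq> ?m"
    then have "?phi ?m < ?phi x" using id[of x] pos by simp
    then show False using that unfolding is_arg_min_def by auto
  qed
  ultimately show ?thesis unfolding arg_min_def by (rule some_equality)
qed

lemma prox_point_add:
  "2 * K + mu \<noteq> 0 \<Longrightarrow> prox_point K mu (g + e) u y = prox_point K mu g u y - (1 / (2 * K + mu)) *\<^sub>R e"
  unfolding prox_point_def by (simp add: algebra_simps)

lemma prox_point_three_point:
  fixes f :: "'a::euclidean_space \<Rightarrow> real" and u x y :: 'a
  assumes sc: "strongly_convex mu f" and sm: "smooth_with L f Df" and K: "K > 0" and mu: "mu \<ge> 0"
  defines "m \<equiv> prox_point K mu (Df y) u y"
  shows "inner (Df y) (m - y) \<le> f x - f y + K * (norm (u - x))\<^sup>2 - (K + mu / 2) * (norm (m - x))\<^sup>2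
           - K * (norm (m - u))\<^sup>2"
proof -
  have "f y + inner (Df y) (x - y) + mu / 2 * (norm (x - y))\<^sup>2 \<le> f x"
    by (rule strongly_convex_above_tangent[OF sc sm])
  moreover have "0 \<le> mu / 2 * (norm (m - y))\<^sup>2" using mu by simp
  moreover have "inner (Df y) x + K * (norm (u - x))\<^sup>2 + mu / 2 * (norm (x - y))\<^sup>2
      = inner (Df y) m + K * (norm (m - u))\<^sup>2 + mu / 2 * (norm (m - y))\<^sup>2 + (K + mu / 2) * (norm (m - x))\<^sup>2"
    using prox_objective_eq[OF K mu, of "Df y" x u y] unfolding m_def by (simp add: norm_minus_commute)
  ultimately show ?thesis by (simp add: inner_diff_right)
qed

section \<open>Step sizes\<close>

lemma largest_root_eq:
  assumes a: "a > 0" and c: "c \<ge> 0"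
  shows "a * (largest_root a b c)\<^sup>2 + b * largest_root a b c = c"
proof -
  define S where "S = sqrt (b\<^sup>2 + 4 * a * c)"
  have "S\<^sup>2 = b\<^sup>2 + 4 * a * c" unfolding S_def using a c by simp
  moreover have "2 * a * largest_root a b c + b = S"
    unfolding largest_root_def S_def using a by simp
  ultimately have "4 * a * (a * (largest_root a b c)\<^sup>2 + b * largest_root a b c) = 4 * a * c"
    by (auto simp: power2_eq_square algebra_simps)
  then show ?thesis using a by simp
qed

lemma largest_root_pos:
  assumes a: "a > 0" and c: "c > 0"
  shows "largest_root a b c > 0"
proof -
  have "b \<le> sqrt (b\<^sup>2)" by simp
  also have "sqrt (b\<^sup>2) < sqrt (b\<^sup>2 + 4 * a * c)"
    by (rule real_sqrt_less_mono) (use a c in simp)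
  finally show ?thesis unfolding largest_root_def using a by simp
qed

lemma le_largest_root_imp_quadratic_le:
  assumes a: "a > 0" and b: "b \<ge> 0" and c: "c \<ge> 0"
    and t: "0 \<le> t" "t \<le> largest_root a b c"
  shows "a * t\<^sup>2 + b * t \<le> c"
proof -
  have "a * t\<^sup>2 \<le> a * (largest_root a b c)\<^sup>2" using a t by (simp add: power_mono)
  moreover have "b * t \<le> b * largest_root a b c" using b t by (simp add: mult_left_mono)
  ultimately show ?thesis using largest_root_eq[OF a c, of b] by linarith
qed

lemma stepsize_bounds:
  fixes p Lbar Gam mu theta_min theta gamma :: real
  assumes p: "0 < p" "p \<le> 1" and Lbar: "0 < Lbar" and Gam: "1 \<le> Gam" and mu: "0 \<le> mu"
    and theta_min: "0 < theta_min" "theta_min \<le> 1 / 4"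
    and theta: "theta = min (largest_root (p * Lbar * Gam) (p * (Lbar + Gam * mu)) (Lbar + Gam * mu)) theta_min"
    and gamma: "gamma = p * theta * Gam / (1 - p * theta)"
  shows "0 < theta" "0 < gamma" "theta * Lbar \<le> 2 * ((Lbar + Gam * mu) / (2 * gamma))"
proof -
  define A where "A = Lbar + Gam * mu"
  have A: "0 < A" "0 < p * Lbar * Gam" unfolding A_def using p Lbar Gam mu by (simp_all add: add_pos_nonneg)
  have "0 < largest_root (p * Lbar * Gam) (p * A) A" by (rule largest_root_pos[OF A(2,1)])
  then show theta_pos: "0 < theta" unfolding theta A_def using theta_min by simp
  have "p * theta \<le> 1 * (1 / 4)" using p theta_min theta_pos unfolding theta by (intro mult_mono) auto
  then have p_theta: "p * theta < 1" by simp
  then show gamma_pos: "0 < gamma" unfolding gamma using p theta_pos Gam by simp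
  have "p * Lbar * Gam * theta\<^sup>2 + p * A * theta \<le> A"
    using A p theta_pos unfolding theta A_def by (intro le_largest_root_imp_quadratic_le) auto
  then have "theta * Lbar * gamma \<le> A"
    unfolding gamma using p_theta by (simp add: field_simps power2_eq_square)
  then show "theta * Lbar \<le> 2 * ((Lbar + Gam * mu) / (2 * gamma))"
    unfolding A_def using gamma_pos by (simp add: field_simps)
qed

section \<open>Second moments and independence\<close>

lemma integrable_inner_of_square_integrable:
  fixes X Y :: "'w \<Rightarrow> 'a::euclidean_space"
  assumes "X \<in> borel_measurable M" "Y \<in> borel_measurable M"
    and "integrable M (\<lambda>s. (norm (X s))\<^sup>2)" "integrable M (\<lambda>s. (norm (Y s))\<^sup>2)"
  shows "integrable M (\<lambda>s. inner (X s) (Y s))"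
proof (rule Bochner_Integration.integrable_bound[where f = "\<lambda>s. (norm (X s))\<^sup>2 + (norm (Y s))\<^sup>2"])
  show "integrable M (\<lambda>s. (norm (X s))\<^sup>2 + (norm (Y s))\<^sup>2)" using assms by auto
  show "(\<lambda>s. inner (X s) (Y s)) \<in> borel_measurable M" using assms by measurable
  have "\<bar>inner (X s) (Y s)\<bar> \<le> (norm (X s))\<^sup>2 + (norm (Y s))\<^sup>2" for s
  proof -
    have "\<bar>inner (X s) (Y s)\<bar> \<le> norm (X s) * norm (Y s)" by (rule Cauchy_Schwarz_ineq2)
    moreover have "0 \<le> (norm (X s) - norm (Y s))\<^sup>2" "0 \<le> norm (X s) * norm (Y s)" by simp_all
    ultimately show ?thesis unfolding power2_diff by linarith
  qed
  then show "AE s in M. norm (inner (X s) (Y s)) \<le> norm ((norm (X s))\<^sup>2 + (norm (Y s))\<^sup>2)"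
    by simp
qed

lemma integral_norm_sum_power2_orthogonal:
  fixes e :: "'i \<Rightarrow> 'w \<Rightarrow> 'a::euclidean_space"
  assumes fin: "finite I"
    and meas: "\<And>i. i \<in> I \<Longrightarrow> e i \<in> borel_measurable M"
    and sq: "\<And>i. i \<in> I \<Longrightarrow> integrable M (\<lambda>s. (norm (e i s))\<^sup>2)"
    and orth: "\<And>i j. i \<in> I \<Longrightarrow> j \<in> I \<Longrightarrow> i \<noteq> j \<Longrightarrow> (\<integral>s. inner (e i s) (e j s) \<partial>M) = 0"
  shows "integrable M (\<lambda>s. (norm (\<Sum>i\<in>I. e i s))\<^sup>2)"
    and "(\<integral>s. (norm (\<Sum>i\<in>I. e i s))\<^sup>2 \<partial>M) = (\<Sum>i\<in>I. \<integral>s. (norm (e i s))\<^sup>2 \<partial>M)"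
proof -
  have eq: "(norm (\<Sum>i\<in>I. e i s))\<^sup>2 = (\<Sum>i\<in>I. \<Sum>j\<in>I. inner (e i s) (e j s))" for s
    by (simp add: power2_norm_eq_inner inner_sum_left inner_sum_right, subst sum.swap, rule refl)
  have int: "integrable M (\<lambda>s. inner (e i s) (e j s))" if "i \<in> I" "j \<in> I" for i j
    using that by (intro integrable_inner_of_square_integrable meas sq)
  then show "integrable M (\<lambda>s. (norm (\<Sum>i\<in>I. e i s))\<^sup>2)"
    unfolding eq by (intro Bochner_Integration.integrable_sum) auto
  have "(\<integral>s. (norm (\<Sum>i\<in>I. e i s))\<^sup>2 \<partial>M) = (\<Sum>i\<in>I. \<Sum>j\<in>I. \<integral>s. inner (e i s) (e j s) \<partial>M)"
    unfolding eq using int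
    by (simp add: Bochner_Integration.integral_sum Bochner_Integration.integrable_sum)
  also have "\<dots> = (\<Sum>i\<in>I. \<Sum>j\<in>I. if j = i then \<integral>s. (norm (e i s))\<^sup>2 \<partial>M else 0)"
    using orth by (intro sum.cong refl) (auto simp: power2_norm_eq_inner)
  also have "\<dots> = (\<Sum>i\<in>I. \<integral>s. (norm (e i s))\<^sup>2 \<partial>M)"
    using fin by simp
  finally show "(\<integral>s. (norm (\<Sum>i\<in>I. e i s))\<^sup>2 \<partial>M) = (\<Sum>i\<in>I. \<integral>s. (norm (e i s))\<^sup>2 \<partial>M)" .
qed

lemma (in prob_space) indep_var_integral_inner_eq_0:
  fixes X Y :: "'a \<Rightarrow> 'v::euclidean_space"
  assumes ind: "indep_var borel X borel Y"
    and X: "integrable M X" "(\<integral>s. X s \<partial>M) = 0" and Y: "integrable M Y"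
  shows "(\<integral>s. inner (X s) (Y s) \<partial>M) = 0"
proof -
  have ind_b: "indep_var borel ((\<lambda>v. inner v b) \<circ> X) borel ((\<lambda>v. inner v b) \<circ> Y)" for b
    by (rule indep_var_compose[OF ind]) auto
  have "(\<integral>s. inner (X s) b * inner (Y s) b \<partial>M) = (\<integral>s. inner (X s) b \<partial>M) * (\<integral>s. inner (Y s) b \<partial>M)" for b
    using X Y by (intro indep_var_lebesgue_integral[OF ind_b[unfolded o_def]]) auto
  moreover have "integrable M (\<lambda>s. inner (X s) b * inner (Y s) b)" for b
    using X Y by (intro indep_var_integrable[OF ind_b[unfolded o_def]]) auto
  moreover have "(\<integral>s. inner (X s) b \<partial>M) = 0" for b using X by simp
  ultimately have "(\<integral>s. (\<Sum>b\<in>Basis. inner (X s) b * inner (Y s) b) \<partial>M) = 0"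
    by (simp add: Bochner_Integration.integral_sum)
  moreover have "(\<integral>s. inner (X s) (Y s) \<partial>M) = (\<integral>s. (\<Sum>b\<in>Basis. inner (X s) b * inner (Y s) b) \<partial>M)"
    by (rule Bochner_Integration.integral_cong[OF refl]) (rule euclidean_inner)
  ultimately show ?thesis by simp
qed

lemma (in prob_space) indep_vars_imp_indep_var:
  assumes ind: "indep_vars (\<lambda>_. borel) X I" and ij: "i \<in> I" "j \<in> I" "i \<noteq> j"
  shows "indep_var borel (X i) borel (X j)"
proof -
  have "indep_var (PiM {i} (\<lambda>_. borel)) (\<lambda>\<omega>. restrict (\<lambda>k. X k \<omega>) {i})
      (PiM {j} (\<lambda>_. borel)) (\<lambda>\<omega>. restrict (\<lambda>k. X k \<omega>) {j})"
    using ij by (intro indep_var_restrict[OF ind]) auto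
  then have "indep_var borel ((\<lambda>v. v i) \<circ> (\<lambda>\<omega>. restrict (\<lambda>k. X k \<omega>) {i}))
      borel ((\<lambda>v. v j) \<circ> (\<lambda>\<omega>. restrict (\<lambda>k. X k \<omega>) {j}))"
    by (rule indep_var_compose) (auto intro: measurable_component_singleton)
  then show ?thesis by (simp add: o_def)
qed

lemma (in prob_space) indep_var_of_indep_set:
  assumes "X \<in> measurable M S" "Y \<in> measurable M T"
    and "indep_set {X -` A \<inter> space M | A. A \<in> sets S} {Y -` B \<inter> space M | B. B \<in> sets T}"
  shows "indep_var S X T Y"
proof -
  have "(\<lambda>i. {case_bool X Y i -` A \<inter> space M | A. A \<in> sets (case_bool S T i)})
      = case_bool {X -` A \<inter> space M | A. A \<in> sets S} {Y -` B \<inter> space M | B. B \<in> sets T}"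
    by (rule ext) (simp split: bool.split)
  then show ?thesis
    unfolding indep_var_def indep_vars_def2 using assms
    by (auto simp: indep_set_def split: bool.split)
qed

lemma preimages_comp_subset:
  assumes X: "X \<in> measurable M S" and F: "F \<in> measurable S R"
  shows "{(F \<circ> X) -` A \<inter> space M | A. A \<in> sets R} \<subseteq> {X -` A \<inter> space M | A. A \<in> sets S}"
proof safe
  fix A assume "A \<in> sets R"
  then have "F -` A \<inter> space S \<in> sets S" using F by (rule measurable_sets[rotated])
  moreover have "(F \<circ> X) -` A \<inter> space M = X -` (F -` A \<inter> space S) \<inter> space M"
    using measurable_space[OF X] by auto
  ultimately show "\<exists>A'. (F \<circ> X) -` A \<inter> space M = X -` A' \<inter> space M \<and> A' \<in> sets S" by blast
qed

lemma (in prob_space) indep_set_mono: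
  assumes "indep_set A B" "A' \<subseteq> A" "B' \<subseteq> B"
  shows "indep_set A' B'"
  using assms(1) unfolding indep_set_def
  by (rule indep_sets_mono_sets) (use assms(2,3) in \<open>simp split: bool.split\<close>)

lemma (in prob_space) indep_var_comp_of_indep_set:
  assumes X: "X \<in> measurable M S" and Y: "Y \<in> measurable M T"
    and F: "F \<in> measurable S R" and G: "G \<in> measurable T R"
    and ind: "indep_set {X -` A \<inter> space M | A. A \<in> sets S} {Y -` B \<inter> space M | B. B \<in> sets T}"
  shows "indep_var R (F \<circ> X) R (G \<circ> Y)"
proof (rule indep_var_of_indep_set)
  show "indep_set {(F \<circ> X) -` A \<inter> space M | A. A \<in> sets R} {(G \<circ> Y) -` A \<inter> space M | A. A \<in> sets R}"
    using ind preimages_comp_subset[OF X F] preimages_comp_subset[OF Y G] by (rule indep_set_mono)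
  show "F \<circ> X \<in> measurable M R" using X F by (rule measurable_comp)
  show "G \<circ> Y \<in> measurable M R" using Y G by (rule measurable_comp)
qed

lemma (in prob_space) integral_norm_add_scaleR_mean_zero:
  fixes E :: "'a \<Rightarrow> 'v::euclidean_space"
  assumes E: "integrable M E" "(\<integral>s. E s \<partial>M) = 0" "integrable M (\<lambda>s. (norm (E s))\<^sup>2)"
  shows "integrable M (\<lambda>s. (norm (v + k *\<^sub>R E s))\<^sup>2)"
    and "(\<integral>s. (norm (v + k *\<^sub>R E s))\<^sup>2 \<partial>M) = (norm v)\<^sup>2 + k\<^sup>2 * (\<integral>s. (norm (E s))\<^sup>2 \<partial>M)"
proof -
  have eq: "(norm (v + k *\<^sub>R E s))\<^sup>2 = (norm v)\<^sup>2 + 2 * k * inner v (E s) + k\<^sup>2 * (norm (E s))\<^sup>2" for s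
    unfolding norm_add_power2 by (simp add: power_mult_distrib)
  show "integrable M (\<lambda>s. (norm (v + k *\<^sub>R E s))\<^sup>2)"
    unfolding eq using E by simp
  have "(\<integral>s. (norm (v + k *\<^sub>R E s))\<^sup>2 \<partial>M)
      = (norm v)\<^sup>2 + 2 * k * (\<integral>s. inner v (E s) \<partial>M) + k\<^sup>2 * (\<integral>s. (norm (E s))\<^sup>2 \<partial>M)"
    unfolding eq using E by (simp add: Bochner_Integration.integral_add prob_space)
  also have "(\<integral>s. inner v (E s) \<partial>M) = 0" using E by simp
  finally show "(\<integral>s. (norm (v + k *\<^sub>R E s))\<^sup>2 \<partial>M) = (norm v)\<^sup>2 + k\<^sup>2 * (\<integral>s. (norm (E s))\<^sup>2 \<partial>M)"
    by simp
qed

text \<open>Independence makes the compression errors pairwise orthogonal in L^2, so their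
  second moments add up.\<close>
lemma (in prob_space) unbiased_compressors_sum_error:
  fixes C :: "'i \<Rightarrow> 'a \<Rightarrow> 'v::euclidean_space \<Rightarrow> 'v"
  assumes fin: "finite I" and C: "\<forall>i\<in>I. unbiased_compressor M omega (C i)"
    and ind: "indep_vars (\<lambda>_. borel) (\<lambda>i s. C i s (a i)) I"
  defines "E \<equiv> \<lambda>s. \<Sum>i\<in>I. C i s (a i) - a i"
  shows "E \<in> borel_measurable M" "integrable M E" "(\<integral>s. E s \<partial>M) = 0"
    "integrable M (\<lambda>s. (norm (E s))\<^sup>2)" "(\<integral>s. (norm (E s))\<^sup>2 \<partial>M) \<le> omega * (\<Sum>i\<in>I. (norm (a i))\<^sup>2)"
proof -
  define e where "e = (\<lambda>i s. C i s (a i) - a i)"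
  have Ci: "(\<lambda>s. C i s (a i)) \<in> borel_measurable M" "integrable M (\<lambda>s. C i s (a i))"
    "(\<integral>s. C i s (a i) \<partial>M) = a i" "integrable M (\<lambda>s. (norm (e i s))\<^sup>2)"
    "(\<integral>s. (norm (e i s))\<^sup>2 \<partial>M) \<le> omega * (norm (a i))\<^sup>2" if "i \<in> I" for i
    using C that unfolding unbiased_compressor_def e_def by blast+
  have e: "e i \<in> borel_measurable M" "integrable M (e i)" "(\<integral>s. e i s \<partial>M) = 0" if "i \<in> I" for i
    using Ci[OF that] unfolding e_def by (auto simp: prob_space)
  have "(\<integral>s. inner (e i s) (e j s) \<partial>M) = 0" if "i \<in> I" "j \<in> I" "i \<noteq> j" for i j
  proof (rule indep_var_integral_inner_eq_0)
    have "indep_var borel ((\<lambda>v. v - a i) \<circ> (\<lambda>s. C i s (a i))) borel ((\<lambda>v. v - a j) \<circ> (\<lambda>s. C j s (a j)))"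
      using indep_vars_imp_indep_var[OF ind that] by (rule indep_var_compose) auto
    then show "indep_var borel (e i) borel (e j)" unfolding e_def by (simp add: o_def)
  qed (use e that in auto)
  from integral_norm_sum_power2_orthogonal[OF fin, of e M, OF e(1) Ci(4) this]
  have "integrable M (\<lambda>s. (norm (E s))\<^sup>2)" "(\<integral>s. (norm (E s))\<^sup>2 \<partial>M) = (\<Sum>i\<in>I. \<integral>s. (norm (e i s))\<^sup>2 \<partial>M)"
    unfolding E_def e_def by auto
  moreover have "(\<Sum>i\<in>I. \<integral>s. (norm (e i s))\<^sup>2 \<partial>M) \<le> (\<Sum>i\<in>I. omega * (norm (a i))\<^sup>2)"
    using Ci(5) by (rule sum_mono)
  ultimately show "integrable M (\<lambda>s. (norm (E s))\<^sup>2)"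
    "(\<integral>s. (norm (E s))\<^sup>2 \<partial>M) \<le> omega * (\<Sum>i\<in>I. (norm (a i))\<^sup>2)"
    by (simp_all add: sum_distrib_left)
  show "E \<in> borel_measurable M" "integrable M E" "(\<integral>s. E s \<partial>M) = 0"
    using e unfolding E_def e_def by (auto simp: Bochner_Integration.integral_sum)
qed

lemma (in prob_space) integral_if_indep_coin:
  fixes Phi :: "'b \<Rightarrow> real" and c :: "'a \<Rightarrow> bool"
  assumes X: "X \<in> measurable M S" and c: "c \<in> measurable M (count_space UNIV)"
    and ind: "indep_set {X -` A \<inter> space M | A. A \<in> sets S} {c -` B \<inter> space M | B. B \<in> sets (count_space UNIV)}"
    and Phi: "Phi \<in> borel_measurable S" and int: "integrable M (\<lambda>s. Phi (X s))"
    and p: "prob {s \<in> space M. c s} = p"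
  shows "integrable M (\<lambda>s. if c s then Phi (X s) else k)"
    and "(\<integral>s. (if c s then Phi (X s) else k) \<partial>M) = p * (\<integral>s. Phi (X s) \<partial>M) + (1 - p) * k"
proof -
  define psi where "psi = (\<lambda>b. if b then 1 else (0::real))"
  have ind': "indep_var borel (\<lambda>s. Phi (X s)) borel (\<lambda>s. psi (c s))"
    using indep_var_comp_of_indep_set[OF X c Phi _ ind, of psi] by (simp add: o_def)
  have psi_int: "integrable M (\<lambda>s. psi (c s))"
    using c by (intro integrable_const_bound[where B = 1]) (auto simp: psi_def)
  have prod: "integrable M (\<lambda>s. Phi (X s) * psi (c s))"
    "(\<integral>s. Phi (X s) * psi (c s) \<partial>M) = (\<integral>s. Phi (X s) \<partial>M) * (\<integral>s. psi (c s) \<partial>M)"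
    using indep_var_integrable[OF ind' int psi_int] indep_var_lebesgue_integral[OF ind' int psi_int] .
  have "{s \<in> space M. c s} \<in> sets M" using c by measurable
  moreover have "(\<integral>s. psi (c s) \<partial>M) = (\<integral>s. indicator {s \<in> space M. c s} s \<partial>M)"
    by (rule Bochner_Integration.integral_cong) (auto simp: psi_def)
  ultimately have psi_mean: "(\<integral>s. psi (c s) \<partial>M) = p" using p by simp
  have eq: "(if c s then Phi (X s) else k) = Phi (X s) * psi (c s) + k * (1 - psi (c s))" for s
    unfolding psi_def by simp
  show "integrable M (\<lambda>s. if c s then Phi (X s) else k)"
    unfolding eq using prod psi_int by simp
  show "(\<integral>s. (if c s then Phi (X s) else k) \<partial>M) = p * (\<integral>s. Phi (X s) \<partial>M) + (1 - p) * k"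
    unfolding eq using prod psi_int psi_mean by (simp add: prob_space)
qed

lemma (in prob_space) integral_coin_step:
  fixes f :: "'v::euclidean_space \<Rightarrow> real" and E :: "'a \<Rightarrow> 'w::euclidean_space"
  assumes f: "continuous_on UNIV f" and Psi: "continuous_on UNIV Psi"
    and E: "E \<in> borel_measurable M" and c: "c \<in> measurable M (count_space UNIV)"
    and ind: "indep_set {E -` A \<inter> space M | A. A \<in> sets borel} {c -` B \<inter> space M | B. B \<in> sets (count_space UNIV)}"
    and p: "prob {s \<in> space M. c s} = p" and int: "integrable M (\<lambda>s. f (Psi (E s)))"
  shows "(\<integral>s. f (if c s then Psi (E s) else z) - w \<partial>M) = p * ((\<integral>s. f (Psi (E s)) \<partial>M) - w) + (1 - p) * (f z - w)"
proof -
  have "continuous_on UNIV (f \<circ> Psi)"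
    by (rule continuous_on_compose[OF Psi continuous_on_subset[OF f]]) simp
  then have "(\<lambda>v. f (Psi v)) \<in> borel_measurable borel" unfolding o_def by (rule borel_measurable_continuous_onI)
  from integral_if_indep_coin[OF E c ind this int p, of "f z"]
  show ?thesis by (simp add: if_distrib[of f] prob_space algebra_simps)
qed

lemma (in prob_space) smooth_with_integral_le:
  fixes f :: "'v::euclidean_space \<Rightarrow> real" and X :: "'a \<Rightarrow> 'v"
  assumes sm: "smooth_with L f Df" and X: "X \<in> borel_measurable M" "integrable M X"
    and sq: "integrable M (\<lambda>s. (norm (X s - y))\<^sup>2)"
  shows "integrable M (\<lambda>s. f (X s))"
    and "(\<integral>s. f (X s) \<partial>M) \<le> f y + inner (Df y) ((\<integral>s. X s \<partial>M) - y) + L / 2 * (\<integral>s. (norm (X s - y))\<^sup>2 \<partial>M)"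
proof -
  define lin where "lin = (\<lambda>s. f y + inner (Df y) (X s - y))"
  define dev where "dev = (\<lambda>s. L / 2 * (norm (X s - y))\<^sup>2)"
  have bounds: "lin s - dev s \<le> f (X s)" "f (X s) \<le> lin s + dev s" for s
    unfolding lin_def dev_def
    using smooth_with_ge_quadratic[OF sm, of y "X s"] smooth_with_le_quadratic[OF sm, of "X s" y]
    by simp_all
  have lin: "integrable M lin" "(\<integral>s. lin s \<partial>M) = f y + inner (Df y) ((\<integral>s. X s \<partial>M) - y)"
    unfolding lin_def using X by (simp_all add: prob_space inner_diff_right)
  have dev: "integrable M dev" "(\<integral>s. dev s \<partial>M) = L / 2 * (\<integral>s. (norm (X s - y))\<^sup>2 \<partial>M)"
    unfolding dev_def using sq by simp_all
  show int: "integrable M (\<lambda>s. f (X s))"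
  proof (rule Bochner_Integration.integrable_bound[where f = "\<lambda>s. \<bar>lin s\<bar> + \<bar>dev s\<bar>"])
    show "integrable M (\<lambda>s. \<bar>lin s\<bar> + \<bar>dev s\<bar>)" using lin dev by simp
    have "f \<in> borel_measurable borel"
      using smooth_with_continuous[OF sm] by (rule borel_measurable_continuous_onI)
    with X show "(\<lambda>s. f (X s)) \<in> borel_measurable M" by measurable
    have "\<bar>f (X s)\<bar> \<le> \<bar>lin s\<bar> + \<bar>dev s\<bar>" for s using bounds[of s] by arith
    then show "AE s in M. norm (f (X s)) \<le> norm (\<bar>lin s\<bar> + \<bar>dev s\<bar>)" by simp
  qed
  have "(\<integral>s. f (X s) \<partial>M) \<le> (\<integral>s. lin s + dev s \<partial>M)"
    by (intro integral_mono int Bochner_Integration.integrable_add lin(1) dev(1) bounds(2))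
  then show "(\<integral>s. f (X s) \<partial>M) \<le> f y + inner (Df y) ((\<integral>s. X s \<partial>M) - y) + L / 2 * (\<integral>s. (norm (X s - y))\<^sup>2 \<partial>M)"
    using lin dev by simp
qed

section \<open>One step of the method\<close>

lemma (in prob_space) noisy_prox_step_moments:
  fixes f :: "'v::euclidean_space \<Rightarrow> real" and E u' x' :: "'a \<Rightarrow> 'v"
  assumes sm: "smooth_with L f Df" and K: "0 < K" and mu: "0 \<le> mu"
    and E: "E \<in> borel_measurable M" "integrable M E" "(\<integral>s. E s \<partial>M) = 0"
      "integrable M (\<lambda>s. (norm (E s))\<^sup>2)"
    and u': "u' = (\<lambda>s. prox_point K mu (Df y + E s) u y)"
    and x': "x' = (\<lambda>s. theta *\<^sub>R u' s + (1 - theta) *\<^sub>R z)"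
  defines "m \<equiv> prox_point K mu (Df y) u y"
  shows "integrable M (\<lambda>s. f (x' s))"
    and "(\<integral>s. f (x' s) \<partial>M) \<le> f y + theta * inner (Df y) (m - y) + (1 - theta) * inner (Df y) (z - y)
           + L / 2 * (\<integral>s. (norm (x' s - y))\<^sup>2 \<partial>M)"
    and "(\<integral>s. (norm (u' s - v))\<^sup>2 \<partial>M) = (norm (m - v))\<^sup>2 + (\<integral>s. (norm (E s))\<^sup>2 \<partial>M) / (2 * K + mu)\<^sup>2"
proof -
  define xm where "xm = theta *\<^sub>R m + (1 - theta) *\<^sub>R z"
  have u'_val: "u' s = m + (- (1 / (2 * K + mu))) *\<^sub>R E s" for s
    unfolding u' m_def using prox_point_add[of K mu "Df y" "E s" u y] K mu by simp
  then have u'_diff: "u' s - v = (m - v) + (- (1 / (2 * K + mu))) *\<^sub>R E s" for s by simp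
  show "(\<integral>s. (norm (u' s - v))\<^sup>2 \<partial>M) = (norm (m - v))\<^sup>2 + (\<integral>s. (norm (E s))\<^sup>2 \<partial>M) / (2 * K + mu)\<^sup>2"
    unfolding u'_diff integral_norm_add_scaleR_mean_zero(2)[OF E(2-4)] by (simp add: power_divide)
  have x'_fun: "x' = (\<lambda>s. xm + (- (theta / (2 * K + mu))) *\<^sub>R E s)"
    unfolding x' xm_def u'_val by (simp add: algebra_simps)
  then have x'_diff: "x' s - v = (xm - v) + (- (theta / (2 * K + mu))) *\<^sub>R E s" for s v
    by simp
  have "integrable M (\<lambda>s. (norm (x' s - y))\<^sup>2)"
    unfolding x'_diff by (rule integral_norm_add_scaleR_mean_zero(1)[OF E(2-4)])
  then have x': "x' \<in> borel_measurable M" "integrable M x'" "(\<integral>s. x' s \<partial>M) = xm"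
    "integrable M (\<lambda>s. (norm (x' s - y))\<^sup>2)"
    using E x'_fun by (simp_all add: prob_space)
  then show "integrable M (\<lambda>s. f (x' s))"
    by (intro smooth_with_integral_le(1)[OF sm])
  have "inner (Df y) (xm - y) = theta * inner (Df y) (m - y) + (1 - theta) * inner (Df y) (z - y)"
    unfolding xm_def by (simp add: inner_diff_right algebra_simps)
  then show "(\<integral>s. f (x' s) \<partial>M) \<le> f y + theta * inner (Df y) (m - y) + (1 - theta) * inner (Df y) (z - y)
      + L / 2 * (\<integral>s. (norm (x' s - y))\<^sup>2 \<partial>M)"
    using smooth_with_integral_le(2)[OF sm x'(1,2,4)] x'(3) by simp
qed

lemma prox_noise_terms_le:
  fixes Lbar B theta V :: real
  assumes Lbar: "0 < Lbar" and B: "0 < B" and theta: "0 \<le> theta" "theta * Lbar \<le> B"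
    and V: "0 \<le> V"
  shows "theta / (2 * B) * V + theta\<^sup>2 * Lbar / 2 * (V / B\<^sup>2) \<le> V / Lbar"
proof -
  define r where "r = theta * Lbar / B"
  have r0: "0 \<le> r" unfolding r_def using Lbar B theta by simp
  have r1: "r \<le> 1" unfolding r_def using B theta by (simp add: pos_divide_le_eq)
  have "theta / (2 * B) * V + theta\<^sup>2 * Lbar / 2 * (V / B\<^sup>2) = (r + r\<^sup>2) / 2 * (V / Lbar)"
    unfolding r_def using Lbar B by (simp add: field_simps power2_eq_square)
  also have "\<dots> \<le> 1 * (V / Lbar)"
  proof (rule mult_right_mono)
    show "(r + r\<^sup>2) / 2 \<le> 1" using r0 r1 power_le_one[OF r0 r1, of 2] by simp
  qed (use V Lbar in simp)
  finally show ?thesis by simp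
qed

lemma (in prob_space) noisy_prox_step_le:
  fixes f :: "'v::euclidean_space \<Rightarrow> real" and E u' x' :: "'a \<Rightarrow> 'v"
  assumes sc: "strongly_convex mu f" and sm: "smooth_with L f Df" and mu: "0 \<le> mu"
    and K: "0 < K" and theta: "0 < theta" "theta * Lbar \<le> 2 * K" and Lbar: "0 < Lbar"
    and E: "E \<in> borel_measurable M" "integrable M E" "(\<integral>s. E s \<partial>M) = 0"
      "integrable M (\<lambda>s. (norm (E s))\<^sup>2)"
    and V: "(\<integral>s. (norm (E s))\<^sup>2 \<partial>M) \<le> Lbar * W"
    and u': "u' = (\<lambda>s. prox_point K mu (Df y + E s) u y)"
    and x': "x' = (\<lambda>s. theta *\<^sub>R u' s + (1 - theta) *\<^sub>R z)"
  shows "integrable M (\<lambda>s. f (x' s))"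
    and "(\<integral>s. f (x' s) \<partial>M) - f xs \<le> (1 - theta) * (f z - f xs)
        + theta * (K * (norm (u - xs))\<^sup>2 - (K + mu / 2) * (\<integral>s. (norm (u' s - xs))\<^sup>2 \<partial>M))
        + (theta - 1) * bregman f Df z y + L / 2 * (\<integral>s. (norm (x' s - y))\<^sup>2 \<partial>M)
        - theta\<^sup>2 * Lbar / 2 * (\<integral>s. (norm (u' s - u))\<^sup>2 \<partial>M) + W"
proof -
  define B where "B = 2 * K + mu"
  define m where "m = prox_point K mu (Df y) u y"
  define V where "V = (\<integral>s. (norm (E s))\<^sup>2 \<partial>M)"
  define T where "T = f xs - f y + K * (norm (u - xs))\<^sup>2 - (K + mu / 2) * (norm (m - xs))\<^sup>2
    - K * (norm (m - u))\<^sup>2"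
  define Exy where "Exy = (\<integral>s. (norm (x' s - y))\<^sup>2 \<partial>M)"
  have B: "0 < B" "K + mu / 2 = B / 2" unfolding B_def using K mu by simp_all
  note moments = noisy_prox_step_moments[OF sm K mu E u' x', folded m_def B_def V_def Exy_def]
  show "integrable M (\<lambda>s. f (x' s))" by (rule moments(1))
  have three_point: "theta * inner (Df y) (m - y) \<le> theta * T"
    using prox_point_three_point[OF sc sm K mu, of y u xs] theta(1) unfolding m_def T_def
    by (intro mult_left_mono) auto
  have "0 \<le> theta * (K - theta * Lbar / 2) * (norm (m - u))\<^sup>2"
    using theta by simp
  moreover have "theta / (2 * B) * V + theta\<^sup>2 * Lbar / 2 * (V / B\<^sup>2) \<le> V / Lbar"
    using theta B(1) mu Lbar unfolding B_def V_def by (intro prox_noise_terms_le) auto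
  moreover have "V / Lbar \<le> W" using V Lbar unfolding V_def by (simp add: pos_divide_le_eq mult.commute)
  moreover have "(1 - theta) * (f z - f xs)
        + theta * (K * (norm (u - xs))\<^sup>2 - (K + mu / 2) * ((norm (m - xs))\<^sup>2 + V / B\<^sup>2))
        + (theta - 1) * bregman f Df z y + L / 2 * Exy
        - theta\<^sup>2 * Lbar / 2 * ((norm (m - u))\<^sup>2 + V / B\<^sup>2) + V / Lbar
      = f y + theta * T + (1 - theta) * inner (Df y) (z - y) + L / 2 * Exy - f xs
        + theta * (K - theta * Lbar / 2) * (norm (m - u))\<^sup>2
        + (V / Lbar - (theta / (2 * B) * V + theta\<^sup>2 * Lbar / 2 * (V / B\<^sup>2)))"
    unfolding T_def B(2) bregman_def using B(1) by (simp add: field_simps power2_eq_square)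
  ultimately show "(\<integral>s. f (x' s) \<partial>M) - f xs \<le> (1 - theta) * (f z - f xs)
        + theta * (K * (norm (u - xs))\<^sup>2 - (K + mu / 2) * (\<integral>s. (norm (u' s - xs))\<^sup>2 \<partial>M))
        + (theta - 1) * bregman f Df z y + L / 2 * (\<integral>s. (norm (x' s - y))\<^sup>2 \<partial>M)
        - theta\<^sup>2 * Lbar / 2 * (\<integral>s. (norm (u' s - u))\<^sup>2 \<partial>M) + W"
    using moments(2) three_point unfolding moments(3) Exy_def[symmetric] V_def[symmetric]
    by linarith
qed

lemma (in prob_space) compressed_gradient_error:
  fixes fi :: "nat \<Rightarrow> 'v::euclidean_space \<Rightarrow> real" and Cy :: "nat \<Rightarrow> 'a \<Rightarrow> 'v \<Rightarrow> 'v"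
  assumes n: "0 < n" and f: "f = (\<lambda>x. (1 / real n) * (\<Sum>i<n. fi i x))"
    and Df: "Df = (\<lambda>x. (1 / real n) *\<^sub>R (\<Sum>i<n. Dfi i x))"
    and smooth: "\<forall>i<n. smooth_with (Li i) (fi i) (Dfi i)" and convex: "\<forall>i<n. convex_on UNIV (fi i)"
    and Lmax: "\<forall>i<n. Li i \<le> Lmax" and Cy: "\<forall>i<n. unbiased_compressor M omega (Cy i)"
    and ind: "indep_vars (\<lambda>_. borel) (\<lambda>i s. Cy i s (Dfi i y - h i)) {..<n}"
    and ind_coin: "indep_set
      {(\<lambda>s. \<lambda>i\<in>{..<n}. Cy i s (Dfi i y - h i)) -` A \<inter> space M | A. A \<in> sets (PiM {..<n} (\<lambda>_. borel))} C"
    and g: "g = (\<lambda>s. (1 / real n) *\<^sub>R (\<Sum>i<n. h i) + (1 / real n) *\<^sub>R (\<Sum>i<n. Cy i s (Dfi i y - h i)))"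
    and E_def: "E = (\<lambda>s. g s - Df y)"
  shows "E \<in> borel_measurable M" "integrable M E" "(\<integral>s. E s \<partial>M) = 0"
    "integrable M (\<lambda>s. (norm (E s))\<^sup>2)"
    "(\<integral>s. (norm (E s))\<^sup>2 \<partial>M) \<le> omega / real n * (4 * Lmax * bregman f Df z y
        + 2 * ((1 / real n) * (\<Sum>i<n. (norm (h i - Dfi i z))\<^sup>2)))"
    "indep_set {E -` A \<inter> space M | A. A \<in> sets borel} C"
proof -
  define a where "a = (\<lambda>i. Dfi i y - h i)"
  define S where "S = (\<lambda>s. \<Sum>i<n. Cy i s (a i) - a i)"
  have E_S: "E = (\<lambda>s. (1 / real n) *\<^sub>R S s)"
    unfolding E_def g Df S_def a_def
    by (simp add: sum_subtractf sum.distrib scaleR_diff_right scaleR_add_right algebra_simps)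
  have S_facts: "S \<in> borel_measurable M" "integrable M S" "(\<integral>s. S s \<partial>M) = 0"
    "integrable M (\<lambda>s. (norm (S s))\<^sup>2)" "(\<integral>s. (norm (S s))\<^sup>2 \<partial>M) \<le> omega * (\<Sum>i<n. (norm (a i))\<^sup>2)"
    using unbiased_compressors_sum_error[of "{..<n}" omega Cy a] Cy ind unfolding S_def a_def by auto
  then show "E \<in> borel_measurable M" "integrable M E" "(\<integral>s. E s \<partial>M) = 0"
    "integrable M (\<lambda>s. (norm (E s))\<^sup>2)"
    unfolding E_S by (simp_all add: power_divide)
  have omega: "0 \<le> omega" using Cy n unfolding unbiased_compressor_def by blast
  have a_le: "(\<Sum>i<n. (norm (a i))\<^sup>2) \<le> real n * (4 * Lmax * bregman f Df z y
      + 2 * ((1 / real n) * (\<Sum>i<n. (norm (h i - Dfi i z))\<^sup>2)))"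
    unfolding a_def by (rule sum_shifted_gradients_le_bregman[OF n f Df smooth convex Lmax])
  have "(\<integral>s. (norm (E s))\<^sup>2 \<partial>M) = (\<integral>s. (norm (S s))\<^sup>2 \<partial>M) / (real n)\<^sup>2"
    unfolding E_S by (simp add: power_divide)
  also have "\<dots> \<le> omega * (\<Sum>i<n. (norm (a i))\<^sup>2) / (real n)\<^sup>2"
    using S_facts(5) by (simp add: divide_right_mono)
  also have "\<dots> \<le> omega * (real n * (4 * Lmax * bregman f Df z y
      + 2 * ((1 / real n) * (\<Sum>i<n. (norm (h i - Dfi i z))\<^sup>2)))) / (real n)\<^sup>2"
    using a_le omega by (intro divide_right_mono mult_left_mono) auto
  finally show "(\<integral>s. (norm (E s))\<^sup>2 \<partial>M) \<le> omega / real n * (4 * Lmax * bregman f Df z y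
        + 2 * ((1 / real n) * (\<Sum>i<n. (norm (h i - Dfi i z))\<^sup>2)))"
    using n by (simp add: power2_eq_square)
  define X where "X = (\<lambda>s. \<lambda>i\<in>{..<n}. Cy i s (a i))"
  define Lin where "Lin = (\<lambda>v :: nat \<Rightarrow> 'v. (1 / real n) *\<^sub>R (\<Sum>i<n. v i - a i))"
  have X: "X \<in> measurable M (PiM {..<n} (\<lambda>_. borel))"
    unfolding X_def using Cy unfolding unbiased_compressor_def by (intro measurable_restrict) auto
  have Lin: "Lin \<in> borel_measurable (PiM {..<n} (\<lambda>_. borel))"
    unfolding Lin_def by measurable
  have "E = Lin \<circ> X" unfolding E_S S_def Lin_def X_def by (auto intro!: sum.cong)
  moreover have "indep_set {X -` A \<inter> space M | A. A \<in> sets (PiM {..<n} (\<lambda>_. borel))} C"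
    using ind_coin unfolding X_def a_def .
  ultimately show "indep_set {E -` A \<inter> space M | A. A \<in> sets borel} C"
    using indep_set_mono preimages_comp_subset[OF X Lin] by blast
qed

theorem lemma6:
  fixes n :: nat
    and fi :: "nat \<Rightarrow> 'a::euclidean_space \<Rightarrow> real" and Dfi :: "nat \<Rightarrow> 'a \<Rightarrow> 'a"
    and Li :: "nat \<Rightarrow> real" and Lhat L Lbar mu p Gam alpha tau omega :: real
    and xs :: 'a
    and M :: "'w measure" and Cy :: "nat \<Rightarrow> 'w \<Rightarrow> 'a \<Rightarrow> 'a" and c :: "'w \<Rightarrow> bool"
    and u z w :: 'a and h :: "nat \<Rightarrow> 'a"
    and f :: "'a \<Rightarrow> real" and Df :: "'a \<Rightarrow> 'a"
    and Lmax theta_min theta_bar theta gamma Gam' :: real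
    and y :: 'a and g u' x' z' :: "'w \<Rightarrow> 'a"
  assumes n_pos: "n > 0"
    and def_f: "f = (\<lambda>x. (1 / real n) * (\<Sum>i<n. fi i x))"
    and def_Df: "Df = (\<lambda>x. (1 / real n) *\<^sub>R (\<Sum>i<n. Dfi i x))"
    and def_Lmax: "Lmax = Max (Li ` {..<n})"
    and def_theta_min: "theta_min = 1 / 4 * min (min 1 (alpha / p)) (min (tau / p) ((1 / (omega + 1)) / p))"
    and def_theta_bar: "theta_bar = largest_root (p * Lbar * Gam) (p * (Lbar + Gam * mu)) (Lbar + Gam * mu)"
    and def_theta: "theta = min theta_bar theta_min"
    and def_gamma: "gamma = p * theta * Gam / (1 - p * theta)"
    and def_Gam'_: "Gam' = Gam + gamma"
    and def_y: "y = theta *\<^sub>R w + (1 - theta) *\<^sub>R z"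
    and def_g: "g = (\<lambda>s. (1 / real n) *\<^sub>R (\<Sum>i<n. h i) + (1 / real n) *\<^sub>R (\<Sum>i<n. Cy i s (Dfi i y - h i)))"
    and def_u'_: "u' = (\<lambda>s. arg_min (\<lambda>x. inner (g s) x + (Lbar + Gam * mu) / (2 * gamma) * (norm (x - u))\<^sup>2
                                   + mu / 2 * (norm (x - y))\<^sup>2) (\<lambda>_. True))"
    and def_x'_: "x' = (\<lambda>s. theta *\<^sub>R u' s + (1 - theta) *\<^sub>R z)"
    and def_z'_: "z' = (\<lambda>s. if c s then x' s else z)"
    \<comment> \<open>Assumption 1\<close>
    and smooth_i: "\<forall>i<n. smooth_with (Li i) (fi i) (Dfi i)"
    and Lhat_pos: "Lhat > 0"
    and Lhat: "\<forall>x y. (1 / real n) * (\<Sum>i<n. (norm (Dfi i x - Dfi i y))\<^sup>2) \<le> Lhat\<^sup>2 * (norm (x - y))\<^sup>2"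
    \<comment> \<open>Assumption 2\<close>
    and smooth_f: "smooth_with L f Df"
    \<comment> \<open>Assumption 3\<close>
    and convex_i: "\<forall>i<n. convex_on UNIV (fi i)"
    and mu_nonneg: "mu \<ge> 0"
    and strong: "strongly_convex mu f"
    and xs_min: "\<forall>x. f xs \<le> f x"
    \<comment> \<open>parameters of the algorithm\<close>
    and Lbar_pos: "Lbar > 0"
    and p_range: "0 < p" "p \<le> 1"
    and Gam_ge: "Gam \<ge> 1"
    and tau_range: "0 < tau" "tau \<le> 1"
    and alpha_range: "0 < alpha" "alpha \<le> 1"
    \<comment> \<open>randomness of step t: worker compressors and coin\<close>
    and M_prob: "prob_space M"
    and Cy_U: "\<forall>i<n. unbiased_compressor M omega (Cy i)"
    and c_meas: "c \<in> measurable M (count_space UNIV)"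
    and c_prob: "prob_space.prob M {s \<in> space M. c s} = p"
    \<comment> \<open>Assumption 4: independence\<close>
    and indep: "\<forall>xv :: nat \<Rightarrow> 'a.
        prob_space.indep_vars M (\<lambda>_. borel) (\<lambda>i s. Cy i s (xv i)) {..<n} \<and>
        prob_space.indep_set M
          {(\<lambda>s. \<lambda>i\<in>{..<n}. Cy i s (xv i)) -` A \<inter> space M | A. A \<in> sets (PiM {..<n} (\<lambda>_. borel))}
          {c -` B \<inter> space M | B. B \<in> sets (count_space (UNIV :: bool set))}"
  shows "(\<integral>s. f (z' s) - f xs \<partial>M)
    \<le> (1 - p * theta) * (f z - f xs)
      + 2 * p * omega / (real n * Lbar) * ((1 / real n) * (\<Sum>i<n. (norm (h i - Dfi i z))\<^sup>2))
      + p * theta * ((Lbar + Gam * mu) / (2 * gamma) * (norm (u - xs))\<^sup>2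
                     - (Lbar + Gam' * mu) / (2 * gamma) * (\<integral>s. (norm (u' s - xs))\<^sup>2 \<partial>M))
      + p * (4 * omega * Lmax / (real n * Lbar) + theta - 1) * bregman f Df z y
      + p * L / 2 * (\<integral>s. (norm (x' s - y))\<^sup>2 \<partial>M)
      - p * theta\<^sup>2 * Lbar / 2 * (\<integral>s. (norm (u' s - u))\<^sup>2 \<partial>M)"
proof -
  interpret prob_space M by (rule M_prob)
  define K where "K = (Lbar + Gam * mu) / (2 * gamma)"
  define E where "E = (\<lambda>s. g s - Df y)"
  have omega: "0 \<le> omega" using Cy_U n_pos unfolding unbiased_compressor_def by blast
  have "0 < theta_min" "theta_min \<le> 1 / 4"
    unfolding def_theta_min using alpha_range tau_range p_range omega by auto
  note stepsize = stepsize_bounds[OF p_range Lbar_pos Gam_ge mu_nonneg this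
      def_theta[unfolded def_theta_bar] def_gamma, folded K_def]
  have K: "0 < K" "(Lbar + Gam' * mu) / (2 * gamma) = K + mu / 2"
    unfolding K_def def_Gam'_ using stepsize(2) Lbar_pos Gam_ge mu_nonneg
    by (simp_all add: add_pos_nonneg field_simps)
  have Lmax: "\<forall>i<n. Li i \<le> Lmax" unfolding def_Lmax by (auto intro: Max_ge)
  note E = compressed_gradient_error[OF n_pos def_f def_Df smooth_i convex_i Lmax Cy_U
      indep[rule_format, THEN conjunct1] indep[rule_format, THEN conjunct2] def_g E_def]
  have "g = (\<lambda>s. Df y + E s)" unfolding E_def by simp
  then have u'_prox: "u' = (\<lambda>s. prox_point K mu (Df y + E s) u y)"
    unfolding def_u'_ K_def[symmetric] by (simp only: arg_min_prox_objective[OF K(1) mu_nonneg])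
  define W where "W = 4 * omega * Lmax / (real n * Lbar) * bregman f Df z y
    + 2 * omega / (real n * Lbar) * ((1 / real n) * (\<Sum>i<n. (norm (h i - Dfi i z))\<^sup>2))"
  have "Lbar * W = omega / real n * (4 * Lmax * bregman f Df z y
      + 2 * ((1 / real n) * (\<Sum>i<n. (norm (h i - Dfi i z))\<^sup>2)))"
    unfolding W_def using Lbar_pos n_pos by (simp add: field_simps)
  then have "(\<integral>s. (norm (E s))\<^sup>2 \<partial>M) \<le> Lbar * W" using E(5) by simp
  note step = noisy_prox_step_le[OF strong smooth_f mu_nonneg K(1) stepsize(1,3) Lbar_pos E(1-4) this
      u'_prox def_x'_]
  have "continuous_on UNIV (\<lambda>v. theta *\<^sub>R prox_point K mu (Df y + v) u y + (1 - theta) *\<^sub>R z)"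
    unfolding prox_point_def by (intro continuous_intros)
  from integral_coin_step[OF smooth_with_continuous[OF smooth_f] this E(1) c_meas E(6) c_prob] step(1)
  have "(\<integral>s. f (z' s) - f xs \<partial>M) = p * ((\<integral>s. f (x' s) \<partial>M) - f xs) + (1 - p) * (f z - f xs)"
    unfolding def_z'_ def_x'_ u'_prox by simp
  also have "\<dots> \<le> p * ((1 - theta) * (f z - f xs)
        + theta * (K * (norm (u - xs))\<^sup>2 - (K + mu / 2) * (\<integral>s. (norm (u' s - xs))\<^sup>2 \<partial>M))
        + (theta - 1) * bregman f Df z y + L / 2 * (\<integral>s. (norm (x' s - y))\<^sup>2 \<partial>M)
        - theta\<^sup>2 * Lbar / 2 * (\<integral>s. (norm (u' s - u))\<^sup>2 \<partial>M) + W) + (1 - p) * (f z - f xs)"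
    using step(2)[of xs] p_range by (intro add_right_mono mult_left_mono) auto
  finally show ?thesis
    unfolding K_def[symmetric] K(2) W_def by (simp add: algebra_simps)
qed

end
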